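(* Let $I$ be an instance of SPA-S (defined in the context), and let $\mathcal{M}$ be the set of all stable matchings of $I$, partially ordered by the student-oriented dominance relation $\preceq$. Then $(\mathcal{M},\preceq)$ is a distributive lattice. For $M,M'\in\mathcal{M}$, the meet of $M$ and $M'$ is the assignment $M\land M'$ and the join is the assignment $M\lor M'$, where $M\land M'$ and $M\lor M'$ are defined in the context; in particular both are stable matchings of $I$.
   Context: An instance $I$ of SPA-S consists of a finite set $\mathcal{S}$ of students, a finite set $\mathcal{P}$ of projects and a finite set $\mathcal{L}$ of lecturers. Each student $s_i$ ranks a subset $A_i\subseteq\mathcal{P}$ (its acceptable projects) in strict order. Each project is offered by exactly one lecturer; lecturer $l_k$ offers a nonempty set $P_k\subseteq\mathcal{P}$, and the sets $P_k$ partition $\mathcal{P}$. Each lecturer $l_k$ ranks in strict order the students who find at least one project of $P_k$ acceptable. Each project $p_j$ has capacity $c_j\in\mathbb{Z}^+$ and each lecturer $l_k$ has capacity $d_k\in\mathbb{Z}^+$ with $\max\{c_j:p_j\in P_k\}\le d_k\le\sum\{c_j:p_j\in P_k\}$. A pair $(s_i,p_j)$ with $p_j$ offered by $l_k$ is acceptable if $p_j\in A_i$ and $s_i$ is on $l_k$'s list. A matching $M$ is a set of acceptable pairs such that each student is in at most one pair, $|M(p_j)|\le c_j$ for each project and $|M(l_k)|\le d_k$ for each lecturer, where $M(s_i)$ is the project of $s_i$, $M(p_j)$ is the set of students assigned to $p_j$, and $M(l_k)$ is the set of students assigned to projects in $P_k$. A project (lecturer) is undersubscribed/full in $M$ if the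 number of its assigned students is less than/equal to its capacity. An acceptable pair $(s_i,p_j)\notin M$, with $p_j$ offered by $l_k$, blocks $M$ if ($s_i$ is unassigned in $M$ or $s_i$ prefers $p_j$ to $M(s_i)$) and one of the following holds: (P1) $p_j$ and $l_k$ are both undersubscribed in $M$; (P2) $p_j$ is undersubscribed, $l_k$ is full and $s_i\in M(l_k)$; (P3) $p_j$ is undersubscribed, $l_k$ is full and $l_k$ prefers $s_i$ to the worst student in $M(l_k)$; (P4) $p_j$ is full and $l_k$ prefers $s_i$ to the worst student in $M(p_j)$. $M$ is stable if no pair blocks it. A student $s_i$ prefers $M$ to $M'$ if $s_i$ is assigned in both and prefers $M(s_i)$ to $M'(s_i)$; $s_i$ is indifferent if unassigned in both or $M(s_i)=M'(s_i)$. For stable $M,M'$, $M\preceq M'$ means every student prefers $M$ to $M'$ or is indifferent between them. For stable matchings $M,M'$, $M\land M'$ assigns each student unassigned in both to nothing, each student assigned to the same project in both to that project, and every other student to the better (in her preference) of her projects in $M$ and $M'$; $M\lor M'$ is defined identically but with the worse of the two projects. *)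

theory Defs
  imports Main
begin

text \<open>An SPA-S instance. (p,q) \<in> spref I s means student s prefers p to q;
 (s,t) \<in> lpref I l means lecturer l prefers s to t.\<close>
record ('s,'p,'l) spa =
  students  :: "'s set"
  projects  :: "'p set"
  lecturers :: "'l set"
  acc       :: "'s \<Rightarrow> 'p set"
  spref     :: "'s \<Rightarrow> ('p \<times> 'p) set"
  lec       :: "'p \<Rightarrow> 'l"
  lpref     :: "'l \<Rightarrow> ('s \<times> 's) set"
  pcap      :: "'p \<Rightarrow> nat"
  lcap      :: "'l \<Rightarrow> nat"

definition offered :: "('s,'p,'l) spa \<Rightarrow> 'l \<Rightarrow> 'p set" where
  "offered I l = {p \<in> projects I. lec I p = l}"

definition llist :: "('s,'p,'l) spa \<Rightarrow> 'l \<Rightarrow> 's set" where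
  "llist I l = {s \<in> students I. acc I s \<inter> offered I l \<noteq> {}}"

definition spa_instance :: "('s,'p,'l) spa \<Rightarrow> bool" where
  "spa_instance I \<longleftrightarrow>
     finite (students I) \<and> finite (projects I) \<and> finite (lecturers I) \<and>
     (\<forall>s\<in>students I. acc I s \<subseteq> projects I \<and>
        strict_linear_order_on (acc I s) (spref I s) \<and>
        spref I s \<subseteq> acc I s \<times> acc I s) \<and>
     (\<forall>p\<in>projects I. lec I p \<in> lecturers I \<and> pcap I p > 0 \<and> pcap I p \<le> lcap I (lec I p)) \<and>
     (\<forall>l\<in>lecturers I. offered I l \<noteq> {} \<and>
        lcap I l > 0 \<and> lcap I l \<le> (\<Sum>p\<in>offered I l. pcap I p) \<and>
        strict_linear_order_on (llist I l) (lpref I l) \<and>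
        lpref I l \<subseteq> llist I l \<times> llist I l)"

definition acceptable :: "('s,'p,'l) spa \<Rightarrow> 's \<Rightarrow> 'p \<Rightarrow> bool" where
  "acceptable I s p \<longleftrightarrow> s \<in> students I \<and> p \<in> projects I \<and> p \<in> acc I s \<and> s \<in> llist I (lec I p)"

definition assigned_p :: "('s \<times> 'p) set \<Rightarrow> 'p \<Rightarrow> 's set" where
  "assigned_p M p = {s. (s,p) \<in> M}"

definition assigned_l :: "('s,'p,'l) spa \<Rightarrow> ('s \<times> 'p) set \<Rightarrow> 'l \<Rightarrow> 's set" where
  "assigned_l I M l = {s. \<exists>p. (s,p) \<in> M \<and> lec I p = l}"

definition is_matching :: "('s,'p,'l) spa \<Rightarrow> ('s \<times> 'p) set \<Rightarrow> bool" where
  "is_matching I M \<longleftrightarrow>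
     (\<forall>(s,p)\<in>M. acceptable I s p) \<and>
     (\<forall>s p q. (s,p) \<in> M \<longrightarrow> (s,q) \<in> M \<longrightarrow> p = q) \<and>
     (\<forall>p\<in>projects I. card (assigned_p M p) \<le> pcap I p) \<and>
     (\<forall>l\<in>lecturers I. card (assigned_l I M l) \<le> lcap I l)"

definition is_assigned :: "('s \<times> 'p) set \<Rightarrow> 's \<Rightarrow> bool" where
  "is_assigned M s \<longleftrightarrow> (\<exists>p. (s,p) \<in> M)"

text \<open>The worst student of X w.r.t. strict preference r (r relates better to worse).\<close>
definition worst :: "('a \<times> 'a) set \<Rightarrow> 'a set \<Rightarrow> 'a" where
  "worst r X = (THE w. w \<in> X \<and> (\<forall>x\<in>X. x \<noteq> w \<longrightarrow> (x,w) \<in> r))"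

definition blocks :: "('s,'p,'l) spa \<Rightarrow> ('s \<times> 'p) set \<Rightarrow> 's \<Rightarrow> 'p \<Rightarrow> bool" where
  "blocks I M s p \<longleftrightarrow>
     (let l = lec I p; Mp = assigned_p M p; Ml = assigned_l I M l;
          p_under = card Mp < pcap I p; p_full = card Mp = pcap I p;
          l_under = card Ml < lcap I l; l_full = card Ml = lcap I l in
     acceptable I s p \<and> (s,p) \<notin> M \<and>
     (\<not> is_assigned M s \<or> (\<exists>q. (s,q) \<in> M \<and> (p,q) \<in> spref I s)) \<and>
     ((p_under \<and> l_under) \<or>
      (p_under \<and> l_full \<and> s \<in> Ml) \<or>
      (p_under \<and> l_full \<and> (s, worst (lpref I l) Ml) \<in> lpref I l) \<or>
      (p_full \<and> (s, worst (lpref I l) Mp) \<in> lpref I l)))"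

definition stable :: "('s,'p,'l) spa \<Rightarrow> ('s \<times> 'p) set \<Rightarrow> bool" where
  "stable I M \<longleftrightarrow> is_matching I M \<and> (\<forall>s p. \<not> blocks I M s p)"

definition sprefers :: "('s,'p,'l) spa \<Rightarrow> 's \<Rightarrow> ('s \<times> 'p) set \<Rightarrow> ('s \<times> 'p) set \<Rightarrow> bool" where
  "sprefers I s M M' \<longleftrightarrow> (\<exists>p q. (s,p) \<in> M \<and> (s,q) \<in> M' \<and> (p,q) \<in> spref I s)"

definition sindiff :: "'s \<Rightarrow> ('s \<times> 'p) set \<Rightarrow> ('s \<times> 'p) set \<Rightarrow> bool" where
  "sindiff s M M' \<longleftrightarrow> (\<not> is_assigned M s \<and> \<not> is_assigned M' s) \<or>
                       (\<exists>p. (s,p) \<in> M \<and> (s,p) \<in> M')"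

definition dominates :: "('s,'p,'l) spa \<Rightarrow> ('s \<times> 'p) set \<Rightarrow> ('s \<times> 'p) set \<Rightarrow> bool" where
  "dominates I M M' \<longleftrightarrow> (\<forall>s\<in>students I. sprefers I s M M' \<or> sindiff s M M')"

text \<open>Meet / join: students with the same assignment keep it; students assigned in both
 to different projects get the better (meet) / worse (join) one; students assigned in
 only one of M, M' (a case that does not arise for stable matchings) are left unassigned.\<close>
definition meet :: "('s,'p,'l) spa \<Rightarrow> ('s \<times> 'p) set \<Rightarrow> ('s \<times> 'p) set \<Rightarrow> ('s \<times> 'p) set" where
  "meet I M M' = (M \<inter> M') \<union>
     {(s,p). \<exists>q. p \<noteq> q \<and> (p,q) \<in> spref I s \<and>
                ((s,p) \<in> M \<and> (s,q) \<in> M' \<or> (s,p) \<in> M' \<and> (s,q) \<in> M)}"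

definition join :: "('s,'p,'l) spa \<Rightarrow> ('s \<times> 'p) set \<Rightarrow> ('s \<times> 'p) set \<Rightarrow> ('s \<times> 'p) set" where
  "join I M M' = (M \<inter> M') \<union>
     {(s,p). \<exists>q. p \<noteq> q \<and> (q,p) \<in> spref I s \<and>
                ((s,p) \<in> M \<and> (s,q) \<in> M' \<or> (s,p) \<in> M' \<and> (s,q) \<in> M)}"

end

theory Submission
  imports Defs
begin

text \<open>
  Fix stable matchings \<open>M\<close> and \<open>M'\<close>. A student who is better off in \<open>M\<close> (assigned there, and in \<open>M'\<close>
  unassigned or assigned to a worse project) desires her \<open>M\<close>-project in \<open>M'\<close>, so stability of \<open>M'\<close>
  forces its lecturer to reject her: the project or the lecturer is full in \<open>M'\<close> of students the
  lecturer prefers to her. Counting these students project by project and lecturer by lecturer gives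
  an analogue of the Rural Hospitals theorem: \<open>M\<close> and \<open>M'\<close> assign the same students, every lecturer
  has equally many students in both, and on every project either the students better off in \<open>M\<close> or
  those better off in \<open>M'\<close> are equally numerous in \<open>M\<close> and in \<open>M'\<close> (otherwise the lecturer would rank
  some student of \<open>M\<close> below all his students in \<open>M'\<close>, and vice versa). With these identities the
  student-wise better (meet) and worse (join) assignments respect all capacities and inherit the
  lecturers' rejections from \<open>M\<close> and \<open>M'\<close>, so they are stable. As every student's preference is a
  linear order, the lattice laws and distributivity then hold student by student.
\<close>

section \<open>Strict linear orders given as relations\<close>

text \<open>Here \<open>(x, y) \<in> r\<close> reads ``\<open>x\<close> comes first''; for a student's preference \<open>spref I s\<close>,
  \<open>rel_min\<close> picks the preferred and \<open>rel_max\<close> the less preferred of two projects.\<close>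

definition rel_min :: "('a \<times> 'a) set \<Rightarrow> 'a \<Rightarrow> 'a \<Rightarrow> 'a" where
  "rel_min r a b = (if (b, a) \<in> r then b else a)"

definition rel_max :: "('a \<times> 'a) set \<Rightarrow> 'a \<Rightarrow> 'a \<Rightarrow> 'a" where
  "rel_max r a b = (if (a, b) \<in> r then b else a)"

lemma rel_min_le_left: "(rel_min r a b, a) \<in> r\<^sup>="
  by (simp add: rel_min_def)

lemma rel_max_ge_left: "(a, rel_max r a b) \<in> r\<^sup>="
  by (simp add: rel_max_def)

lemma le_rel_min: "(c, a) \<in> r\<^sup>= \<Longrightarrow> (c, b) \<in> r\<^sup>= \<Longrightarrow> (c, rel_min r a b) \<in> r\<^sup>="
  by (simp add: rel_min_def)

lemma rel_max_le: "(a, c) \<in> r\<^sup>= \<Longrightarrow> (b, c) \<in> r\<^sup>= \<Longrightarrow> (rel_max r a b, c) \<in> r\<^sup>="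
  by (simp add: rel_max_def)

context
  fixes A :: "'a set" and r :: "('a \<times> 'a) set"
  assumes order: "strict_linear_order_on A r"
begin

lemma strict_linear_order_on_trans: "(a, b) \<in> r \<Longrightarrow> (b, c) \<in> r \<Longrightarrow> (a, c) \<in> r"
  using order unfolding strict_linear_order_on_def trans_def by blast

lemma strict_linear_order_on_asym: "(a, b) \<in> r \<Longrightarrow> (b, a) \<notin> r"
  using order unfolding strict_linear_order_on_def trans_def irrefl_def by blast

lemma strict_linear_order_on_total: "a \<in> A \<Longrightarrow> b \<in> A \<Longrightarrow> a \<noteq> b \<Longrightarrow> (a, b) \<in> r \<or> (b, a) \<in> r"
  using order unfolding strict_linear_order_on_def total_on_def by blast

lemma all_before_iff:
  assumes "t \<in> A" "X \<subseteq> A"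
  shows "(\<forall>x\<in>X. (x, t) \<in> r) \<longleftrightarrow> t \<notin> X \<and> \<not> (\<exists>x\<in>X. (t, x) \<in> r)"
proof
  assume "\<forall>x\<in>X. (x, t) \<in> r"
  then show "t \<notin> X \<and> \<not> (\<exists>x\<in>X. (t, x) \<in> r)"
    using strict_linear_order_on_asym by blast
next
  assume "t \<notin> X \<and> \<not> (\<exists>x\<in>X. (t, x) \<in> r)"
  then show "\<forall>x\<in>X. (x, t) \<in> r"
    using assms strict_linear_order_on_total by (metis subsetD)
qed

lemma last_exists:
  assumes "finite X" "X \<noteq> {}" "X \<subseteq> A"
  shows "\<exists>w\<in>X. \<forall>x\<in>X. x \<noteq> w \<longrightarrow> (x, w) \<in> r"
  using assms
proof (induction X rule: finite_ne_induct)
  case (singleton x)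
  then show ?case by simp
next
  case (insert x X)
  then obtain w where w: "w \<in> X" "\<forall>y\<in>X. y \<noteq> w \<longrightarrow> (y, w) \<in> r"
    by auto
  show ?case
  proof (cases "(x, w) \<in> r")
    case True
    then show ?thesis
      using w by (intro bexI[of _ w]) auto
  next
    case False
    with insert w(1) have wx: "(w, x) \<in> r"
      using strict_linear_order_on_total[of x w] by auto
    have "(y, x) \<in> r" if "y \<in> X" for y
    proof (cases "y = w")
      case False
      with w that have "(y, w) \<in> r" by blast
      then show ?thesis using wx by (rule strict_linear_order_on_trans)
    qed (use wx in simp)
    then show ?thesis by (intro bexI[of _ x]) auto
  qed
qed

lemma worst_last:
  assumes "finite X" "X \<noteq> {}" "X \<subseteq> A"
  shows "worst r X \<in> X \<and> (\<forall>x\<in>X. x \<noteq> worst r X \<longrightarrow> (x, worst r X) \<in> r)"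
proof -
  obtain w where w: "w \<in> X" "\<forall>x\<in>X. x \<noteq> w \<longrightarrow> (x, w) \<in> r"
    using last_exists[OF assms] by blast
  have unique: "v = w" if "v \<in> X" "\<forall>x\<in>X. x \<noteq> v \<longrightarrow> (x, v) \<in> r" for v
  proof (rule ccontr)
    assume "v \<noteq> w"
    with that w have "(v, w) \<in> r" "(w, v) \<in> r" by (metis, metis)
    then show False using strict_linear_order_on_asym by blast
  qed
  have "worst r X = w"
    unfolding worst_def
  proof (rule the_equality)
    show "w \<in> X \<and> (\<forall>x\<in>X. x \<noteq> w \<longrightarrow> (x, w) \<in> r)" using w by blast
  qed (use unique in blast)
  with w show ?thesis by simp
qed

lemma before_worst_iff:
  assumes "finite X" "X \<noteq> {}" "X \<subseteq> A"
  shows "(t, worst r X) \<in> r \<longleftrightarrow> (\<exists>x\<in>X. (t, x) \<in> r)"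
proof
  show "\<exists>x\<in>X. (t, x) \<in> r" if "(t, worst r X) \<in> r"
    using that worst_last[OF assms] by blast
  show "(t, worst r X) \<in> r" if "\<exists>x\<in>X. (t, x) \<in> r"
  proof -
    from that obtain x where x: "x \<in> X" "(t, x) \<in> r" by blast
    show ?thesis
    proof (cases "x = worst r X")
      case False
      with x worst_last[OF assms] have "(x, worst r X) \<in> r" by blast
      with x(2) show ?thesis by (rule strict_linear_order_on_trans)
    qed (use x in simp)
  qed
qed

lemma rel_min_le_right: "a \<in> A \<Longrightarrow> b \<in> A \<Longrightarrow> (rel_min r a b, b) \<in> r\<^sup>="
  using strict_linear_order_on_total[of a b] by (auto simp: rel_min_def)

lemma rel_max_ge_right: "a \<in> A \<Longrightarrow> b \<in> A \<Longrightarrow> (b, rel_max r a b) \<in> r\<^sup>="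
  using strict_linear_order_on_total[of a b] by (auto simp: rel_max_def)

lemma rel_min_rel_max_distrib:
  assumes "a \<in> A" "b \<in> A" "c \<in> A"
  shows "rel_min r a (rel_max r b c) = rel_max r (rel_min r a b) (rel_min r a c)"
proof -
  have tri: "(x, y) \<in> r \<or> (y, x) \<in> r \<or> x = y" if "x \<in> A" "y \<in> A" for x y
    using strict_linear_order_on_total that by blast
  note ab = tri[OF assms(1,2)] and ac = tri[OF assms(1,3)] and bc = tri[OF assms(2,3)]
  show ?thesis
    unfolding rel_min_def rel_max_def
    using ab ac bc strict_linear_order_on_asym strict_linear_order_on_trans by (smt (verit))
qed

end

section \<open>Blocking pairs from the lecturer's side\<close>

definition desires :: "('s,'p,'l) spa \<Rightarrow> ('s \<times> 'p) set \<Rightarrow> 's \<Rightarrow> 'p \<Rightarrow> bool" where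
  "desires I M s p \<longleftrightarrow> s \<notin> Domain M \<or> (\<exists>q. (s, q) \<in> M \<and> (p, q) \<in> spref I s)"

text \<open>The negation of the four blocking conditions on \<open>(s, p)\<close>, stated without \<open>worst\<close>
  (see \<open>blocks_iff\<close>).\<close>

definition rejects :: "('s,'p,'l) spa \<Rightarrow> ('s \<times> 'p) set \<Rightarrow> 's \<Rightarrow> 'p \<Rightarrow> bool" where
  "rejects I M s p \<longleftrightarrow>
     (card (assigned_p M p) = pcap I p \<and> (\<forall>x\<in>assigned_p M p. (x, s) \<in> lpref I (lec I p))) \<or>
     (card (assigned_l I M (lec I p)) = lcap I (lec I p) \<and>
      (\<forall>x\<in>assigned_l I M (lec I p). (x, s) \<in> lpref I (lec I p)))"

locale spa_s =
  fixes I :: "('s,'p,'l) spa"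
  assumes valid: "spa_instance I"
begin

lemma finite_students: "finite (students I)"
  and finite_projects: "finite (projects I)"
  and finite_lecturers: "finite (lecturers I)"
  using valid by (simp_all add: spa_instance_def)

lemma finite_offered: "finite (offered I l)"
  by (rule finite_subset[OF _ finite_projects]) (auto simp: offered_def)

lemma spref_order: "s \<in> students I \<Longrightarrow> strict_linear_order_on (acc I s) (spref I s)"
  using valid by (simp add: spa_instance_def)

lemma lpref_order: "l \<in> lecturers I \<Longrightarrow> strict_linear_order_on (llist I l) (lpref I l)"
  using valid by (simp add: spa_instance_def)

lemmas spref_asym = strict_linear_order_on_asym[OF spref_order]
  and spref_trans = strict_linear_order_on_trans[OF spref_order]
  and spref_total = strict_linear_order_on_total[OF spref_order]
  and lpref_asym = strict_linear_order_on_asym[OF lpref_order]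
  and lpref_trans = strict_linear_order_on_trans[OF lpref_order]

lemma lcap_pos: "l \<in> lecturers I \<Longrightarrow> 0 < lcap I l"
  and pcap_pos: "p \<in> projects I \<Longrightarrow> 0 < pcap I p"
  and lec_lecturer: "p \<in> projects I \<Longrightarrow> lec I p \<in> lecturers I"
  using valid by (simp_all add: spa_instance_def)

lemma acceptableD:
  assumes "acceptable I s p"
  shows "s \<in> students I" "p \<in> acc I s" "p \<in> projects I" "s \<in> llist I (lec I p)"
    "lec I p \<in> lecturers I" "p \<in> offered I (lec I p)"
  using assms valid by (auto simp: acceptable_def spa_instance_def offered_def)

lemma assigned_p_subset_l: "assigned_p M p \<subseteq> assigned_l I M (lec I p)"
  by (auto simp: assigned_p_def assigned_l_def)

context
  fixes M :: "('s \<times> 'p) set"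
  assumes M: "is_matching I M"
begin

lemma matching_acceptable: "(s, p) \<in> M \<Longrightarrow> acceptable I s p"
  and matching_unique: "(s, p) \<in> M \<Longrightarrow> (s, q) \<in> M \<Longrightarrow> p = q"
  and card_assigned_p_le: "p \<in> projects I \<Longrightarrow> card (assigned_p M p) \<le> pcap I p"
  and card_assigned_l_le: "l \<in> lecturers I \<Longrightarrow> card (assigned_l I M l) \<le> lcap I l"
  using M by (auto simp: is_matching_def)

lemma assigned_l_llist: "assigned_l I M l \<subseteq> llist I l"
  by (auto simp: assigned_l_def dest: matching_acceptable acceptableD(4))

lemma finite_assigned_l: "finite (assigned_l I M l)"
  by (rule finite_subset[OF _ finite_students])
    (auto simp: assigned_l_def dest: matching_acceptable acceptableD(1))

lemma finite_assigned_p: "finite (assigned_p M p)"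
  by (rule finite_subset[OF _ finite_students])
    (auto simp: assigned_p_def dest: matching_acceptable acceptableD(1))

lemma card_assigned_l_Int_sum:
  "card (assigned_l I M l \<inter> X) = (\<Sum>p\<in>offered I l. card (assigned_p M p \<inter> X))"
proof -
  have "assigned_l I M l \<inter> X = (\<Union>p\<in>offered I l. assigned_p M p \<inter> X)"
    using acceptableD(6)[OF matching_acceptable]
    by (auto simp: assigned_l_def assigned_p_def offered_def)
  moreover have "(assigned_p M p \<inter> X) \<inter> (assigned_p M q \<inter> X) = {}" if "p \<noteq> q" for p q
    using that matching_unique by (auto simp: assigned_p_def)
  ultimately show ?thesis
    using finite_assigned_p by (simp only:) (rule card_UN_disjoint, auto simp: finite_offered)
qed

lemma card_Domain_Int_sum:
  "card (Domain M \<inter> X) = (\<Sum>l\<in>lecturers I. card (assigned_l I M l \<inter> X))"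
proof -
  have "Domain M \<inter> X = (\<Union>l\<in>lecturers I. assigned_l I M l \<inter> X)"
    using acceptableD(5)[OF matching_acceptable] by (auto simp: assigned_l_def)
  moreover have "(assigned_l I M l \<inter> X) \<inter> (assigned_l I M l' \<inter> X) = {}" if "l \<noteq> l'" for l l'
    using that matching_unique by (auto simp: assigned_l_def)
  ultimately show ?thesis
    using finite_assigned_l by (simp only:) (rule card_UN_disjoint, auto simp: finite_lecturers)
qed

lemma before_worst_if_full:
  assumes "l \<in> lecturers I" "X \<subseteq> assigned_l I M l" "card X = c" "0 < c"
  shows "(s, worst (lpref I l) X) \<in> lpref I l \<longleftrightarrow> (\<exists>x\<in>X. (s, x) \<in> lpref I l)"
proof -
  have "finite X" "X \<noteq> {}" "X \<subseteq> llist I l"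
    using assms finite_subset[OF assms(2) finite_assigned_l] assigned_l_llist by auto
  then show ?thesis
    using before_worst_iff[OF lpref_order[OF assms(1)]] by blast
qed

lemma blocks_iff:
  "blocks I M s p \<longleftrightarrow> acceptable I s p \<and> desires I M s p \<and> \<not> rejects I M s p"
proof (cases "acceptable I s p \<and> desires I M s p")
  case False
  then show ?thesis
    by (auto simp: blocks_def desires_def is_assigned_def Let_def)
next
  case True
  define l where "l = lec I p"
  let ?P = "assigned_p M p" and ?L = "assigned_l I M l"
  have s: "s \<in> llist I l" and l: "l \<in> lecturers I" and p: "p \<in> projects I"
    using acceptableD[of s p] True by (auto simp: l_def)
  have "(s, p) \<notin> M"
    using True spref_asym[of s p p] matching_unique[of s p] acceptableD(1)[of s p]
    by (auto simp: desires_def)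
  then have sP: "s \<notin> ?P" by (simp add: assigned_p_def)
  have PL: "?P \<subseteq> ?L" and L: "?L \<subseteq> llist I l"
    using assigned_p_subset_l assigned_l_llist by (auto simp: l_def)
  have caps: "card ?P \<le> pcap I p" "card ?L \<le> lcap I l"
    using card_assigned_p_le[OF p] card_assigned_l_le[OF l] .
  have worstP: "card ?P = pcap I p \<Longrightarrow>
      (s, worst (lpref I l) ?P) \<in> lpref I l \<longleftrightarrow> (\<exists>x\<in>?P. (s, x) \<in> lpref I l)"
    using before_worst_if_full[OF l PL _ pcap_pos[OF p]] by blast
  have worstL: "card ?L = lcap I l \<Longrightarrow>
      (s, worst (lpref I l) ?L) \<in> lpref I l \<longleftrightarrow> (\<exists>x\<in>?L. (s, x) \<in> lpref I l)"
    using before_worst_if_full[OF l subset_refl _ lcap_pos[OF l]] by blast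
  have aboveP: "(\<forall>x\<in>?P. (x, s) \<in> lpref I l) \<longleftrightarrow> \<not> (\<exists>x\<in>?P. (s, x) \<in> lpref I l)"
    using all_before_iff[OF lpref_order[OF l] s] PL L sP by blast
  have aboveL: "(\<forall>x\<in>?L. (x, s) \<in> lpref I l) \<longleftrightarrow> s \<notin> ?L \<and> \<not> (\<exists>x\<in>?L. (s, x) \<in> lpref I l)"
    using all_before_iff[OF lpref_order[OF l] s L] .
  have "blocks I M s p \<longleftrightarrow>
      (card ?P < pcap I p \<and> card ?L < lcap I l) \<or>
      (card ?P < pcap I p \<and> card ?L = lcap I l \<and> s \<in> ?L) \<or>
      (card ?P < pcap I p \<and> card ?L = lcap I l \<and> (s, worst (lpref I l) ?L) \<in> lpref I l) \<or>
      (card ?P = pcap I p \<and> (s, worst (lpref I l) ?P) \<in> lpref I l)"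
    using True \<open>(s, p) \<notin> M\<close>
    unfolding blocks_def Let_def l_def[symmetric] by (auto simp: desires_def is_assigned_def)
  also have "\<dots> \<longleftrightarrow> \<not> rejects I M s p"
    unfolding rejects_def l_def[symmetric]
    using worstP worstL aboveP aboveL PL caps by (cases "card ?P = pcap I p") auto
  finally show ?thesis using True by blast
qed

lemma rejects_project_above:
  "rejects I M s p \<Longrightarrow> x \<in> assigned_p M p \<Longrightarrow> (x, s) \<in> lpref I (lec I p)"
  using assigned_p_subset_l unfolding rejects_def by blast

end

lemma stable_iff:
  "stable I M \<longleftrightarrow> is_matching I M \<and> (\<forall>s p. acceptable I s p \<longrightarrow> desires I M s p \<longrightarrow> rejects I M s p)"
  unfolding stable_def using blocks_iff by blast

end

section \<open>Comparing two matchings\<close>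

definition better_in :: "('s,'p,'l) spa \<Rightarrow> ('s \<times> 'p) set \<Rightarrow> ('s \<times> 'p) set \<Rightarrow> 's set" where
  "better_in I M M' = {s. \<exists>p. (s, p) \<in> M \<and> desires I M' s p}"

lemma mem_meet:
  "(s, p) \<in> meet I M M' \<longleftrightarrow> (s, p) \<in> M \<inter> M' \<or>
    (\<exists>q. p \<noteq> q \<and> (p, q) \<in> spref I s \<and> ((s, p) \<in> M \<and> (s, q) \<in> M' \<or> (s, p) \<in> M' \<and> (s, q) \<in> M))"
  by (simp add: meet_def)

lemma mem_join:
  "(s, p) \<in> join I M M' \<longleftrightarrow> (s, p) \<in> M \<inter> M' \<or>
    (\<exists>q. p \<noteq> q \<and> (q, p) \<in> spref I s \<and> ((s, p) \<in> M \<and> (s, q) \<in> M' \<or> (s, p) \<in> M' \<and> (s, q) \<in> M))"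
  by (simp add: join_def)

lemma meet_subset: "meet I M M' \<subseteq> M \<union> M'"
  and join_subset: "join I M M' \<subseteq> M \<union> M'"
  unfolding meet_def join_def by auto

lemma meet_commute: "meet I M M' = meet I M' M"
  and join_commute: "join I M M' = join I M' M"
  unfolding meet_def join_def by blast+

context spa_s
begin

context
  fixes M M' :: "('s \<times> 'p) set"
  assumes M: "is_matching I M" and M': "is_matching I M'"
begin

lemma better_in_cases:
  assumes "(s, p) \<in> M" "(s, p) \<notin> M'"
  shows "s \<in> better_in I M M' \<or> s \<in> better_in I M' M"
proof (cases "s \<in> Domain M'")
  case True
  then obtain q where q: "(s, q) \<in> M'" by blast
  with assms have "p \<noteq> q" by blast
  with spref_total acceptableD[OF matching_acceptable[OF M assms(1)]]
    acceptableD[OF matching_acceptable[OF M' q]]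
  have "(p, q) \<in> spref I s \<or> (q, p) \<in> spref I s" by blast
  with assms(1) q show ?thesis by (auto simp: better_in_def desires_def)
qed (use assms in \<open>auto simp: better_in_def desires_def\<close>)

lemma better_in_disjoint: "better_in I M M' \<inter> better_in I M' M = {}"
proof -
  have False if "(s, p) \<in> M" "desires I M' s p" "(s, q) \<in> M'" "desires I M s q" for s p q
  proof -
    have "(p, q) \<in> spref I s"
      using that(2,3) matching_unique[OF M'] by (auto simp: desires_def)
    moreover have "(q, p) \<in> spref I s"
      using that(1,4) matching_unique[OF M] by (auto simp: desires_def)
    ultimately show False
      using spref_asym acceptableD(1)[OF matching_acceptable[OF M that(1)]] by blast
  qed
  then show ?thesis by (auto simp: better_in_def)
qed

lemma common_not_better_in:
  "(s, p) \<in> M \<Longrightarrow> (s, p) \<in> M' \<Longrightarrow> s \<notin> better_in I M M' \<union> better_in I M' M"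
  using matching_unique[OF M] matching_unique[OF M'] spref_asym
    acceptableD(1)[OF matching_acceptable[OF M]]
  by (fastforce simp: better_in_def desires_def)

lemma card_split:
  assumes "finite C" "finite X" "finite Y"
    and "C \<inter> (better_in I M M' \<union> better_in I M' M) = {}"
  shows "card (C \<union> (X \<inter> better_in I M M') \<union> (Y \<inter> better_in I M' M)) =
    card C + card (X \<inter> better_in I M M') + card (Y \<inter> better_in I M' M)"
proof -
  have "card (C \<union> (X \<inter> better_in I M M')) = card C + card (X \<inter> better_in I M M')"
    using assms by (intro card_Un_disjoint) auto
  moreover have "card (C \<union> (X \<inter> better_in I M M') \<union> (Y \<inter> better_in I M' M)) =
      card (C \<union> (X \<inter> better_in I M M')) + card (Y \<inter> better_in I M' M)"
    using assms better_in_disjoint by (intro card_Un_disjoint) auto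
  ultimately show ?thesis by simp
qed

lemma common_assigned_p_disjoint:
  "assigned_p (M \<inter> M') p \<inter> (better_in I M M' \<union> better_in I M' M) = {}"
  and common_assigned_l_disjoint:
  "assigned_l I (M \<inter> M') l \<inter> (better_in I M M' \<union> better_in I M' M) = {}"
  using common_not_better_in by (auto simp: assigned_p_def assigned_l_def)

lemma finite_common_assigned: "finite (assigned_p (M \<inter> M') p)" "finite (assigned_l I (M \<inter> M') l)"
proof -
  show "finite (assigned_p (M \<inter> M') p)"
    by (rule finite_subset[OF _ finite_assigned_p[OF M]]) (force simp: assigned_p_def)
  show "finite (assigned_l I (M \<inter> M') l)"
    by (rule finite_subset[OF _ finite_assigned_l[OF M, of l]]) (force simp: assigned_l_def)
qed

lemma card_assigned_p_split:
  "card (assigned_p M p) = card (assigned_p (M \<inter> M') p) + card (assigned_p M p \<inter> better_in I M M') +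
     card (assigned_p M p \<inter> better_in I M' M)"
proof -
  have "assigned_p M p = assigned_p (M \<inter> M') p \<union> (assigned_p M p \<inter> better_in I M M') \<union>
      (assigned_p M p \<inter> better_in I M' M)"
    using better_in_cases by (auto simp: assigned_p_def)
  then show ?thesis
    using card_split finite_common_assigned finite_assigned_p[OF M] common_assigned_p_disjoint
    by metis
qed

lemma card_assigned_l_split:
  "card (assigned_l I M l) = card (assigned_l I (M \<inter> M') l) + card (assigned_l I M l \<inter> better_in I M M') +
     card (assigned_l I M l \<inter> better_in I M' M)"
proof -
  have "assigned_l I M l = assigned_l I (M \<inter> M') l \<union> (assigned_l I M l \<inter> better_in I M M') \<union>
      (assigned_l I M l \<inter> better_in I M' M)"
    using better_in_cases by (auto simp: assigned_l_def)
  then show ?thesis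
    using card_split finite_common_assigned finite_assigned_l[OF M] common_assigned_l_disjoint
    by metis
qed

lemma meet_join_pointwise:
  assumes a: "(s, a) \<in> M" and b: "(s, b) \<in> M'"
  shows "(s, p) \<in> meet I M M' \<longleftrightarrow> p = rel_min (spref I s) a b"
    and "(s, p) \<in> join I M M' \<longleftrightarrow> p = rel_max (spref I s) a b"
proof -
  have s: "s \<in> students I"
    using acceptableD(1)[OF matching_acceptable[OF M a]] .
  have "\<And>x. (s, x) \<in> M \<longleftrightarrow> x = a" "\<And>x. (s, x) \<in> M' \<longleftrightarrow> x = b"
    using a b matching_unique[OF M] matching_unique[OF M'] by blast+
  moreover have "(a, a) \<notin> spref I s" "(b, b) \<notin> spref I s"
    "(a, b) \<in> spref I s \<Longrightarrow> (b, a) \<notin> spref I s"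
    using spref_asym[OF s] by blast+
  moreover have "a = b \<or> (a, b) \<in> spref I s \<or> (b, a) \<in> spref I s"
    using spref_total[OF s] acceptableD(2) matching_acceptable[OF M a] matching_acceptable[OF M' b]
    by blast
  ultimately show "(s, p) \<in> meet I M M' \<longleftrightarrow> p = rel_min (spref I s) a b"
    and "(s, p) \<in> join I M M' \<longleftrightarrow> p = rel_max (spref I s) a b"
    unfolding mem_meet mem_join rel_min_def rel_max_def by auto
qed

lemma Domain_meet_join:
  "Domain (meet I M M') = Domain M \<inter> Domain M'" "Domain (join I M M') = Domain M \<inter> Domain M'"
proof -
  have "Domain (meet I M M') \<subseteq> Domain M \<inter> Domain M'" "Domain (join I M M') \<subseteq> Domain M \<inter> Domain M'"
    by (auto simp: mem_meet mem_join)
  moreover have "Domain M \<inter> Domain M' \<subseteq> Domain (meet I M M')" "Domain M \<inter> Domain M' \<subseteq> Domain (join I M M')"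
    using meet_join_pointwise by blast+
  ultimately show "Domain (meet I M M') = Domain M \<inter> Domain M'" "Domain (join I M M') = Domain M \<inter> Domain M'"
    by blast+
qed

lemma meet_join_unique:
  assumes "(s, p) \<in> meet I M M' \<and> (s, q) \<in> meet I M M' \<or> (s, p) \<in> join I M M' \<and> (s, q) \<in> join I M M'"
  shows "p = q"
proof -
  have "s \<in> Domain M \<inter> Domain M'"
    using assms Domain_meet_join by blast
  then obtain a b where "(s, a) \<in> M" "(s, b) \<in> M'" by blast
  with assms show ?thesis
    using meet_join_pointwise by auto
qed

end

end

section \<open>Two stable matchings\<close>

locale two_stable = spa_s +
  fixes M M' :: "('s \<times> 'p) set"
  assumes stable: "stable I M" and stable': "stable I M'"
begin

lemma matching: "is_matching I M" and matching': "is_matching I M'"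
  using stable stable' by (simp_all add: stable_def)

lemma better_in_rejected:
  assumes "s \<in> better_in I M M'" "(s, p) \<in> M"
  shows "rejects I M' s p"
proof -
  have "desires I M' s p"
    using assms matching_unique[OF matching] by (auto simp: better_in_def)
  then show ?thesis
    using stable' matching_acceptable[OF matching assms(2)] by (simp add: stable_iff)
qed

end

sublocale two_stable \<subseteq> swap: two_stable I M' M
  by unfold_locales (fact stable' stable)+

text \<open>A fact of \<open>two_stable\<close> is available for the swapped pair, as \<open>swap.\<dots>\<close>, only after the
  context in which it was proved has been closed; hence the repeated \<open>context\<close> blocks below.\<close>

context two_stable
begin

lemma newcomer_better_in:
  assumes "u \<in> assigned_p M p" "(t, p) \<in> M'" "(t, p) \<notin> M" "(t, u) \<in> lpref I (lec I p)"
  shows "t \<in> better_in I M M'"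
proof (rule ccontr)
  assume "t \<notin> better_in I M M'"
  then have "t \<in> better_in I M' M"
    using better_in_cases[OF matching' matching assms(2,3)] by blast
  then have "rejects I M t p"
    using swap.better_in_rejected assms(2) by blast
  then have "(u, t) \<in> lpref I (lec I p)"
    using rejects_project_above[OF matching] assms(1) by blast
  then show False
    using assms(4) lpref_asym acceptableD(5)[OF matching_acceptable[OF matching' assms(2)]] by blast
qed

lemma card_better_in_project_le_if_full:
  assumes u: "u \<in> assigned_p M p \<inter> better_in I M M'" and full: "card (assigned_p M' p) = pcap I p"
  shows "card (assigned_p M p \<inter> better_in I M M') \<le> card (assigned_p M' p \<inter> better_in I M M')"
proof -
  let ?P = "assigned_p M p" and ?P' = "assigned_p M' p" and ?G = "better_in I M M'"
  have uM: "(u, p) \<in> M" and p: "p \<in> projects I"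
    using u acceptableD(3)[OF matching_acceptable[OF matching]] by (auto simp: assigned_p_def)
  have "rejects I M' u p"
    using u uM better_in_rejected by blast
  then have "?P' - ?P \<subseteq> ?P' \<inter> ?G"
    using newcomer_better_in[of u p] u rejects_project_above[OF matching'] by (auto simp: assigned_p_def)
  moreover have "?P \<inter> ?G \<subseteq> ?P - ?P'"
    using common_not_better_in[OF matching matching'] by (auto simp: assigned_p_def)
  moreover have "finite ?P" "finite ?P'"
    using finite_assigned_p matching matching' by blast+
  ultimately have "card (?P \<inter> ?G) \<le> card ?P - card (?P \<inter> ?P')"
    and "card ?P' - card (?P \<inter> ?P') \<le> card (?P' \<inter> ?G)"
    using card_mono card_Diff_subset_Int[of ?P ?P'] card_Diff_subset_Int[of ?P' ?P]
    by (metis finite_Diff finite_Int Int_commute)+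
  moreover have "card ?P \<le> card ?P'"
    using card_assigned_p_le[OF matching p] full by simp
  ultimately show ?thesis by linarith
qed

lemma better_in_projects_le_or_lowest:
  "(\<forall>q\<in>offered I l. card (assigned_p M q \<inter> better_in I M M') \<le> card (assigned_p M' q \<inter> better_in I M M')) \<or>
   (card (assigned_l I M' l) = lcap I l \<and>
    (\<exists>u\<in>assigned_l I M l. \<forall>x\<in>assigned_l I M' l. (x, u) \<in> lpref I l))"
proof (cases "\<exists>q\<in>offered I l. \<exists>u\<in>assigned_p M q \<inter> better_in I M M'. card (assigned_p M' q) \<noteq> pcap I q")
  case True
  then obtain q u where q: "q \<in> offered I l" and u: "u \<in> assigned_p M q \<inter> better_in I M M'"
    and under: "card (assigned_p M' q) \<noteq> pcap I q"
    by blast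
  have "rejects I M' u q"
    using u better_in_rejected by (auto simp: assigned_p_def)
  with under q have "card (assigned_l I M' l) = lcap I l \<and> (\<forall>x\<in>assigned_l I M' l. (x, u) \<in> lpref I l)"
    by (auto simp: rejects_def offered_def)
  moreover have "u \<in> assigned_l I M l"
    using u q assigned_p_subset_l by (auto simp: offered_def)
  ultimately show ?thesis by blast
next
  case False
  then have "card (assigned_p M q \<inter> better_in I M M') \<le> card (assigned_p M' q \<inter> better_in I M M')"
    if "q \<in> offered I l" for q
    using that card_better_in_project_le_if_full by (cases "assigned_p M q \<inter> better_in I M M' = {}") auto
  then show ?thesis by blast
qed

lemma card_better_in_project_le_if_lowest:
  assumes q: "q \<in> offered I l" and v: "v \<in> assigned_l I M' l" "\<forall>x\<in>assigned_l I M l. (x, v) \<in> lpref I l"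
  shows "card (assigned_p M q \<inter> better_in I M M') \<le> card (assigned_p M' q \<inter> better_in I M M')"
proof (cases "assigned_p M q \<inter> better_in I M M' = {}")
  case False
  then obtain u where u: "u \<in> assigned_p M q \<inter> better_in I M M'" by blast
  have l: "l \<in> lecturers I" "lec I q = l"
    using q lec_lecturer by (auto simp: offered_def)
  show ?thesis
  proof (rule ccontr)
    assume "\<not> ?thesis"
    then have "card (assigned_p M' q) \<noteq> pcap I q"
      using card_better_in_project_le_if_full[OF u] by linarith
    moreover have "rejects I M' u q"
      using u better_in_rejected by (auto simp: assigned_p_def)
    ultimately have "(v, u) \<in> lpref I l"
      using v(1) l(2) by (auto simp: rejects_def)
    moreover have "(u, v) \<in> lpref I l"
      using u l(2) v(2) assigned_p_subset_l by blast
    ultimately show False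
      using lpref_asym[OF l(1)] by blast
  qed
qed simp

end

context two_stable
begin

lemma card_better_in_lecturer_le:
  assumes l: "l \<in> lecturers I"
  shows "card (assigned_l I M l \<inter> better_in I M M') \<le> card (assigned_l I M' l \<inter> better_in I M M')"
  using better_in_projects_le_or_lowest[of l]
proof
  assume "\<forall>q\<in>offered I l. card (assigned_p M q \<inter> better_in I M M') \<le> card (assigned_p M' q \<inter> better_in I M M')"
  then show ?thesis
    by (simp add: card_assigned_l_Int_sum[OF matching] card_assigned_l_Int_sum[OF matching'] sum_mono)
next
  assume "card (assigned_l I M' l) = lcap I l \<and>
    (\<exists>u\<in>assigned_l I M l. \<forall>x\<in>assigned_l I M' l. (x, u) \<in> lpref I l)"
  then obtain u where full: "card (assigned_l I M' l) = lcap I l" and u: "u \<in> assigned_l I M l"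
    and lowest: "\<forall>x\<in>assigned_l I M' l. (x, u) \<in> lpref I l"
    by blast
  have "card (assigned_l I M' l \<inter> better_in I M' M) \<le> card (assigned_l I M l \<inter> better_in I M' M)"
    using swap.card_better_in_project_le_if_lowest[OF _ u lowest]
    by (simp add: card_assigned_l_Int_sum[OF matching] card_assigned_l_Int_sum[OF matching'] sum_mono)
  moreover have "card (assigned_l I M l) \<le> card (assigned_l I M' l)"
    using card_assigned_l_le[OF matching l] full by simp
  ultimately show ?thesis
    using card_assigned_l_split[OF matching matching', of l] card_assigned_l_split[OF matching' matching, of l]
    by (simp add: Int_commute)
qed

lemma better_in_assigned_and_balanced:
  "better_in I M M' \<subseteq> Domain M' \<and>
   (\<forall>l\<in>lecturers I. card (assigned_l I M l \<inter> better_in I M M') = card (assigned_l I M' l \<inter> better_in I M M'))"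
proof -
  let ?G = "better_in I M M'"
  let ?count = "\<lambda>N l. card (assigned_l I N l \<inter> ?G)"
  have "?G \<subseteq> students I"
    using acceptableD(1)[OF matching_acceptable[OF matching]] by (auto simp: better_in_def)
  then have fin: "finite ?G"
    using finite_students finite_subset by blast
  have "card ?G = card (Domain M \<inter> ?G)"
    by (rule arg_cong[where f = card]) (auto simp: better_in_def)
  also have "\<dots> = (\<Sum>l\<in>lecturers I. ?count M l)"
    by (rule card_Domain_Int_sum[OF matching])
  finally have sumM: "card ?G = (\<Sum>l\<in>lecturers I. ?count M l)" .
  have le: "?count M l \<le> ?count M' l" if "l \<in> lecturers I" for l
    using card_better_in_lecturer_le[OF that] .
  have sumM': "(\<Sum>l\<in>lecturers I. ?count M' l) = card (Domain M' \<inter> ?G)"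
    by (rule card_Domain_Int_sum[OF matching', symmetric])
  have "card (Domain M' \<inter> ?G) \<le> card ?G"
    using fin by (intro card_mono) auto
  moreover have "(\<Sum>l\<in>lecturers I. ?count M l) \<le> (\<Sum>l\<in>lecturers I. ?count M' l)"
    using le by (rule sum_mono)
  ultimately have sums: "(\<Sum>l\<in>lecturers I. ?count M l) = (\<Sum>l\<in>lecturers I. ?count M' l)"
    and "card (Domain M' \<inter> ?G) = card ?G"
    using sumM sumM' by linarith+
  then have "Domain M' \<inter> ?G = ?G"
    using fin by (intro card_seteq) auto
  moreover have "?count M l = ?count M' l" if "l \<in> lecturers I" for l
    using sum_mono_inv[OF sums le that finite_lecturers] .
  ultimately show ?thesis by blast
qed

end

context two_stable
begin

lemma Domain_eq: "Domain M = Domain M'"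
proof -
  have "better_in I M M' \<subseteq> Domain M'" "better_in I M' M \<subseteq> Domain M"
    using better_in_assigned_and_balanced swap.better_in_assigned_and_balanced by blast+
  then show ?thesis
    by (auto simp: better_in_def desires_def)
qed

lemma card_better_in_lecturer_eq:
  "l \<in> lecturers I \<Longrightarrow>
    card (assigned_l I M l \<inter> better_in I M M') = card (assigned_l I M' l \<inter> better_in I M M')"
  using better_in_assigned_and_balanced by blast

lemma better_in_iff:
  assumes "(s, p) \<in> M"
  shows "s \<in> better_in I M M' \<longleftrightarrow> (\<exists>q. (s, q) \<in> M' \<and> (p, q) \<in> spref I s)"
  using assms Domain_eq matching_unique[OF matching, of s p] unfolding better_in_def desires_def
  by blast

lemma better_in_pair:
  assumes "(s, a) \<in> M" "(s, b) \<in> M'"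
  shows "s \<in> better_in I M M' \<longleftrightarrow> (a, b) \<in> spref I s"
  using better_in_iff[OF assms(1)] assms(2) matching_unique[OF matching'] by blast

lemma lowest_if_unbalanced:
  assumes p: "p \<in> projects I"
    and unbalanced: "card (assigned_p M p \<inter> better_in I M M') \<noteq> card (assigned_p M' p \<inter> better_in I M M')"
  shows "\<exists>u\<in>assigned_l I M (lec I p). \<forall>x\<in>assigned_l I M' (lec I p). (x, u) \<in> lpref I (lec I p)"
  using better_in_projects_le_or_lowest[of "lec I p"]
proof
  let ?count = "\<lambda>N q. card (assigned_p N q \<inter> better_in I M M')"
  assume le: "\<forall>q\<in>offered I (lec I p). ?count M q \<le> ?count M' q"
  have "lec I p \<in> lecturers I" and p_offered: "p \<in> offered I (lec I p)"
    using p lec_lecturer by (auto simp: offered_def)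
  then have "(\<Sum>q\<in>offered I (lec I p). ?count M q) = (\<Sum>q\<in>offered I (lec I p). ?count M' q)"
    using card_better_in_lecturer_eq[of "lec I p"] card_assigned_l_Int_sum[OF matching]
      card_assigned_l_Int_sum[OF matching'] by simp
  from sum_mono_inv[OF this le[rule_format] p_offered finite_offered]
  have "?count M p = ?count M' p" .
  with unbalanced show ?thesis by contradiction
qed blast

end

context two_stable
begin

lemma card_assigned_l_eq: "l \<in> lecturers I \<Longrightarrow> card (assigned_l I M l) = card (assigned_l I M' l)"
  using card_assigned_l_split[OF matching matching', of l] card_assigned_l_split[OF matching' matching, of l]
    card_better_in_lecturer_eq swap.card_better_in_lecturer_eq
  by (simp add: Int_commute)

lemma balanced_or:
  assumes p: "p \<in> projects I"
  shows "card (assigned_p M p \<inter> better_in I M M') = card (assigned_p M' p \<inter> better_in I M M') \<or>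
    card (assigned_p M' p \<inter> better_in I M' M) = card (assigned_p M p \<inter> better_in I M' M)"
proof (rule ccontr)
  let ?l = "lec I p"
  assume "\<not> ?thesis"
  then obtain u v where u: "u \<in> assigned_l I M ?l" "\<forall>x\<in>assigned_l I M' ?l. (x, u) \<in> lpref I ?l"
    and v: "v \<in> assigned_l I M' ?l" "\<forall>x\<in>assigned_l I M ?l. (x, v) \<in> lpref I ?l"
    using lowest_if_unbalanced[OF p] swap.lowest_if_unbalanced[OF p] by blast
  then have "(u, v) \<in> lpref I ?l" "(v, u) \<in> lpref I ?l" by blast+
  then show False
    using lpref_asym[OF lec_lecturer[OF p]] by blast
qed

lemma better_in_outranks:
  assumes x: "x \<in> assigned_l I M' l \<inter> better_in I M M'"
  shows "\<exists>u\<in>assigned_l I M l. (x, u) \<in> lpref I l"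
proof -
  obtain q where xq: "(x, q) \<in> M'" and l: "lec I q = l"
    using x by (auto simp: assigned_l_def)
  have q: "q \<in> projects I"
    using acceptableD(3)[OF matching_acceptable[OF matching' xq]] .
  have xG: "x \<in> assigned_p M' q \<inter> better_in I M M'"
    using x xq by (simp add: assigned_p_def)
  show ?thesis
  proof (cases "card (assigned_p M q \<inter> better_in I M M') = card (assigned_p M' q \<inter> better_in I M M')")
    case True
    then have "assigned_p M q \<inter> better_in I M M' \<noteq> {}"
      using xG finite_assigned_p[OF matching'] by (metis card_gt_0_iff empty_iff finite_Int)
    then obtain u where u: "(u, q) \<in> M" "u \<in> better_in I M M'"
      by (auto simp: assigned_p_def)
    then have "(x, u) \<in> lpref I l"
      using better_in_rejected rejects_project_above[OF matching'] xG l by blast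
    moreover have "u \<in> assigned_l I M l"
      using u l by (auto simp: assigned_l_def)
    ultimately show ?thesis by blast
  next
    case False
    then show ?thesis
      using lowest_if_unbalanced[OF q] xG l assigned_p_subset_l by blast
  qed
qed

end

section \<open>Meet and join of two stable matchings are stable\<close>

context two_stable
begin

lemma meet_char:
  "(s, p) \<in> meet I M M' \<longleftrightarrow>
    (s, p) \<in> M \<inter> M' \<or> (s, p) \<in> M \<and> s \<in> better_in I M M' \<or> (s, p) \<in> M' \<and> s \<in> better_in I M' M"
proof (cases "s \<in> Domain M")
  case True
  then obtain a b where a: "(s, a) \<in> M" and b: "(s, b) \<in> M'"
    using Domain_eq by blast
  have "\<And>q. (s, q) \<in> M \<longleftrightarrow> q = a" "\<And>q. (s, q) \<in> M' \<longleftrightarrow> q = b"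
    using a b matching_unique[OF matching] matching_unique[OF matching'] by blast+
  moreover have "(q, q) \<notin> spref I s" for q
    using spref_asym acceptableD(1)[OF matching_acceptable[OF matching a]] by blast
  ultimately show ?thesis
    using better_in_pair[OF a b] swap.better_in_pair[OF b a] unfolding mem_meet by auto
next
  case False
  then show ?thesis
    using Domain_eq unfolding mem_meet by blast
qed

lemma join_char:
  "(s, p) \<in> join I M M' \<longleftrightarrow>
    (s, p) \<in> M \<inter> M' \<or> (s, p) \<in> M' \<and> s \<in> better_in I M M' \<or> (s, p) \<in> M \<and> s \<in> better_in I M' M"
proof (cases "s \<in> Domain M")
  case True
  then obtain a b where a: "(s, a) \<in> M" and b: "(s, b) \<in> M'"
    using Domain_eq by blast
  have "\<And>q. (s, q) \<in> M \<longleftrightarrow> q = a" "\<And>q. (s, q) \<in> M' \<longleftrightarrow> q = b"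
    using a b matching_unique[OF matching] matching_unique[OF matching'] by blast+
  moreover have "(q, q) \<notin> spref I s" for q
    using spref_asym acceptableD(1)[OF matching_acceptable[OF matching a]] by blast
  ultimately show ?thesis
    using better_in_pair[OF a b] swap.better_in_pair[OF b a] unfolding mem_join by auto
next
  case False
  then show ?thesis
    using Domain_eq unfolding mem_join by blast
qed

lemma assigned_p_meet:
  "assigned_p (meet I M M') p = assigned_p (M \<inter> M') p \<union> (assigned_p M p \<inter> better_in I M M') \<union>
     (assigned_p M' p \<inter> better_in I M' M)"
  by (auto simp: assigned_p_def meet_char)

lemma assigned_p_join:
  "assigned_p (join I M M') p = assigned_p (M \<inter> M') p \<union> (assigned_p M' p \<inter> better_in I M M') \<union>
     (assigned_p M p \<inter> better_in I M' M)"
  by (auto simp: assigned_p_def join_char)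

lemma assigned_l_meet:
  "assigned_l I (meet I M M') l = assigned_l I (M \<inter> M') l \<union> (assigned_l I M l \<inter> better_in I M M') \<union>
     (assigned_l I M' l \<inter> better_in I M' M)"
  by (auto simp: assigned_l_def meet_char)

lemma assigned_l_join:
  "assigned_l I (join I M M') l = assigned_l I (M \<inter> M') l \<union> (assigned_l I M' l \<inter> better_in I M M') \<union>
     (assigned_l I M l \<inter> better_in I M' M)"
  by (auto simp: assigned_l_def join_char)

lemma card_assigned_p_meet:
  "card (assigned_p (meet I M M') p) = card (assigned_p (M \<inter> M') p) +
     card (assigned_p M p \<inter> better_in I M M') + card (assigned_p M' p \<inter> better_in I M' M)"
  unfolding assigned_p_meet
  by (rule card_split[OF matching matching'])
    (simp_all add: finite_common_assigned[OF matching matching'] finite_assigned_p matching matching'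
      common_assigned_p_disjoint[OF matching matching'])

lemma card_assigned_p_join:
  "card (assigned_p (join I M M') p) = card (assigned_p (M \<inter> M') p) +
     card (assigned_p M' p \<inter> better_in I M M') + card (assigned_p M p \<inter> better_in I M' M)"
  unfolding assigned_p_join
  by (rule card_split[OF matching matching'])
    (simp_all add: finite_common_assigned[OF matching matching'] finite_assigned_p matching matching'
      common_assigned_p_disjoint[OF matching matching'])

lemma card_assigned_l_meet:
  assumes "l \<in> lecturers I"
  shows "card (assigned_l I (meet I M M') l) = card (assigned_l I M l)"
proof -
  have "card (assigned_l I (meet I M M') l) = card (assigned_l I (M \<inter> M') l) +
     card (assigned_l I M l \<inter> better_in I M M') + card (assigned_l I M' l \<inter> better_in I M' M)"
    unfolding assigned_l_meet
    by (rule card_split[OF matching matching'])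
      (simp_all add: finite_common_assigned[OF matching matching'] finite_assigned_l matching matching'
        common_assigned_l_disjoint[OF matching matching'])
  then show ?thesis
    using card_assigned_l_split[OF matching matching', of l] swap.card_better_in_lecturer_eq[OF assms]
    by simp
qed

lemma card_assigned_l_join:
  assumes "l \<in> lecturers I"
  shows "card (assigned_l I (join I M M') l) = card (assigned_l I M l)"
proof -
  have "card (assigned_l I (join I M M') l) = card (assigned_l I (M \<inter> M') l) +
     card (assigned_l I M' l \<inter> better_in I M M') + card (assigned_l I M l \<inter> better_in I M' M)"
    unfolding assigned_l_join
    by (rule card_split[OF matching matching'])
      (simp_all add: finite_common_assigned[OF matching matching'] finite_assigned_l matching matching'
        common_assigned_l_disjoint[OF matching matching'])
  then show ?thesis
    using card_assigned_l_split[OF matching matching', of l] card_better_in_lecturer_eq[OF assms]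
    by simp
qed

lemma card_assigned_p_meet_join:
  assumes "p \<in> projects I"
  shows "card (assigned_p (meet I M M') p) = card (assigned_p M' p) \<and>
      card (assigned_p (join I M M') p) = card (assigned_p M p) \<or>
    card (assigned_p (meet I M M') p) = card (assigned_p M p) \<and>
      card (assigned_p (join I M M') p) = card (assigned_p M' p)"
  using balanced_or[OF assms] card_assigned_p_meet[of p] card_assigned_p_join[of p]
    card_assigned_p_split[OF matching matching', of p] card_assigned_p_split[OF matching' matching, of p]
  by (auto simp: Int_commute)

lemma meet_matching: "is_matching I (meet I M M')"
  unfolding is_matching_def
proof (intro conjI)
  show "\<forall>(s, p)\<in>meet I M M'. acceptable I s p"
    using meet_subset matching_acceptable[OF matching] matching_acceptable[OF matching'] by blast
  show "\<forall>s p q. (s, p) \<in> meet I M M' \<longrightarrow> (s, q) \<in> meet I M M' \<longrightarrow> p = q"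
    using meet_join_unique[OF matching matching'] by blast
  show "\<forall>p\<in>projects I. card (assigned_p (meet I M M') p) \<le> pcap I p"
    using card_assigned_p_meet_join card_assigned_p_le[OF matching] card_assigned_p_le[OF matching']
    by fastforce
  show "\<forall>l\<in>lecturers I. card (assigned_l I (meet I M M') l) \<le> lcap I l"
    using card_assigned_l_meet card_assigned_l_le[OF matching] by simp
qed

lemma join_matching: "is_matching I (join I M M')"
  unfolding is_matching_def
proof (intro conjI)
  show "\<forall>(s, p)\<in>join I M M'. acceptable I s p"
    using join_subset matching_acceptable[OF matching] matching_acceptable[OF matching'] by blast
  show "\<forall>s p q. (s, p) \<in> join I M M' \<longrightarrow> (s, q) \<in> join I M M' \<longrightarrow> p = q"
    using meet_join_unique[OF matching matching'] by blast
  show "\<forall>p\<in>projects I. card (assigned_p (join I M M') p) \<le> pcap I p"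
    using card_assigned_p_meet_join card_assigned_p_le[OF matching] card_assigned_p_le[OF matching']
    by fastforce
  show "\<forall>l\<in>lecturers I. card (assigned_l I (join I M M') l) \<le> lcap I l"
    using card_assigned_l_join card_assigned_l_le[OF matching] by simp
qed

lemma meet_desires:
  assumes "desires I (meet I M M') s p"
  shows "desires I M s p \<and> desires I M' s p"
proof (cases "s \<in> Domain (meet I M M')")
  case True
  with assms obtain q where q: "(s, q) \<in> meet I M M'" and pq: "(p, q) \<in> spref I s"
    by (auto simp: desires_def)
  have s: "s \<in> students I"
    using q matching_acceptable[OF meet_matching] acceptableD(1) by blast
  consider "(s, q) \<in> M" "(s, q) \<in> M'" | "(s, q) \<in> M" "s \<in> better_in I M M'"
    | "(s, q) \<in> M'" "s \<in> better_in I M' M"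
    using q meet_char by blast
  then show ?thesis
  proof cases
    case 2
    then obtain q' where "(s, q') \<in> M'" "(q, q') \<in> spref I s"
      using better_in_iff by blast
    with 2 pq show ?thesis
      using spref_trans[OF s] by (auto simp: desires_def)
  next
    case 3
    then obtain q' where "(s, q') \<in> M" "(q, q') \<in> spref I s"
      using swap.better_in_iff by blast
    with 3 pq show ?thesis
      using spref_trans[OF s] by (auto simp: desires_def)
  qed (use pq in \<open>auto simp: desires_def\<close>)
next
  case False
  then show ?thesis
    using Domain_meet_join[OF matching matching'] Domain_eq by (simp add: desires_def)
qed

lemma join_desires:
  assumes "desires I (join I M M') s p"
  shows "desires I M s p \<or> desires I M' s p"
proof (cases "s \<in> Domain (join I M M')")
  case True
  with assms obtain q where "(s, q) \<in> join I M M'" "(p, q) \<in> spref I s"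
    by (auto simp: desires_def)
  moreover have "(s, q) \<in> M \<or> (s, q) \<in> M'"
    using calculation(1) join_subset by blast
  ultimately show ?thesis
    by (auto simp: desires_def)
next
  case False
  then show ?thesis
    using Domain_meet_join[OF matching matching'] Domain_eq by (simp add: desires_def)
qed

end

context two_stable
begin

lemma meet_rejects_lecturer:
  assumes rejects: "rejects I M s p" "rejects I M' s p"
    and under: "card (assigned_p (meet I M M') p) \<noteq> pcap I p" and p: "p \<in> projects I"
  shows "\<forall>x\<in>assigned_l I M (lec I p). (x, s) \<in> lpref I (lec I p)"
proof (cases "card (assigned_p M p) = pcap I p")
  case True
  let ?l = "lec I p"
  have "card (assigned_p (meet I M M') p) = card (assigned_p M' p)"
    using card_assigned_p_meet_join[OF p] True under by auto
  then have "\<forall>x\<in>assigned_l I M' ?l. (x, s) \<in> lpref I ?l"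
    using rejects(2) under by (simp add: rejects_def)
  moreover have "card (assigned_p M' p \<inter> better_in I M' M) \<noteq> card (assigned_p M p \<inter> better_in I M' M)"
    using card_assigned_p_meet[of p] card_assigned_p_split[OF matching matching', of p] True under
    by linarith
  then obtain v where "v \<in> assigned_l I M' ?l" "\<forall>x\<in>assigned_l I M ?l. (x, v) \<in> lpref I ?l"
    using swap.lowest_if_unbalanced[OF p] by blast
  ultimately show ?thesis
    using lpref_trans[OF lec_lecturer[OF p]] by blast
qed (use rejects(1) in \<open>simp add: rejects_def\<close>)

lemma join_rejects_lecturer:
  assumes l: "l \<in> lecturers I"
    and full: "card (assigned_l I M' l) = lcap I l" and above: "\<forall>x\<in>assigned_l I M' l. (x, s) \<in> lpref I l"
  shows "card (assigned_l I (join I M M') l) = lcap I l \<and>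
    (\<forall>x\<in>assigned_l I (join I M M') l. (x, s) \<in> lpref I l)"
proof -
  have "\<forall>x\<in>assigned_l I M l \<inter> better_in I M' M. (x, s) \<in> lpref I l"
    using swap.better_in_outranks above lpref_trans[OF l] by blast
  then have "\<forall>x\<in>assigned_l I (join I M M') l. (x, s) \<in> lpref I l"
    using above unfolding assigned_l_join by (auto simp: assigned_l_def)
  then show ?thesis
    using card_assigned_l_join[OF l] card_assigned_l_eq[OF l] full by simp
qed

lemma join_rejects_if_full:
  assumes p: "p \<in> projects I" and full: "card (assigned_p M' p) = pcap I p"
    and above: "\<forall>x\<in>assigned_p M' p. (x, s) \<in> lpref I (lec I p)"
    and join_full: "card (assigned_p (join I M M') p) = pcap I p"
  shows "\<forall>x\<in>assigned_p (join I M M') p. (x, s) \<in> lpref I (lec I p)"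
proof -
  let ?G' = "better_in I M' M"
  have "card (assigned_p M p \<inter> ?G') = card (assigned_p M' p \<inter> ?G')"
    using card_assigned_p_join[of p] card_assigned_p_split[OF matching' matching, of p] full join_full
    by (simp add: Int_commute)
  then have "(x, s) \<in> lpref I (lec I p)" if x: "x \<in> assigned_p M p \<inter> ?G'" for x
  proof -
    have "0 < card (assigned_p M p \<inter> ?G')"
      using x finite_assigned_p[OF matching, of p] by (auto simp: card_gt_0_iff)
    then have "assigned_p M' p \<inter> ?G' \<noteq> {}"
      using \<open>card _ = card _\<close> by force
    then obtain v where v: "(v, p) \<in> M'" "v \<in> ?G'"
      by (auto simp: assigned_p_def)
    then have "(x, v) \<in> lpref I (lec I p)"
      using x swap.better_in_rejected rejects_project_above[OF matching] by blast
    then show ?thesis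
      using v above lpref_trans[OF lec_lecturer[OF p]] by (auto simp: assigned_p_def)
  qed
  then show ?thesis
    unfolding assigned_p_join using above by (auto simp: assigned_p_def)
qed

lemma join_rejects_if_undersubscribed:
  assumes p: "p \<in> projects I" and full: "card (assigned_p M' p) = pcap I p"
    and above: "\<forall>x\<in>assigned_p M' p. (x, s) \<in> lpref I (lec I p)"
    and join_under: "card (assigned_p (join I M M') p) \<noteq> pcap I p"
  shows "card (assigned_l I M (lec I p)) = lcap I (lec I p) \<and>
    (\<forall>x\<in>assigned_l I M (lec I p). (x, s) \<in> lpref I (lec I p))"
proof -
  let ?l = "lec I p" and ?G = "better_in I M M'" and ?G' = "better_in I M' M"
  note split = card_assigned_p_join[of p] card_assigned_p_split[OF matching matching', of p]
    card_assigned_p_split[OF matching' matching, of p]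
  then have "card (assigned_p M p \<inter> ?G') \<noteq> card (assigned_p M' p \<inter> ?G')"
    using full join_under by (simp add: Int_commute)
  then have "card (assigned_p M p \<inter> ?G) = card (assigned_p M' p \<inter> ?G)"
    using balanced_or[OF p] by auto
  then have under: "card (assigned_p M p) \<noteq> pcap I p"
    and "card (assigned_p M p \<inter> ?G') < card (assigned_p M' p \<inter> ?G')"
    using split full join_under card_assigned_p_le[OF matching p] by (simp_all add: Int_commute)
  then obtain v where v: "(v, p) \<in> M'" "v \<in> ?G'"
    by (metis assigned_p_def card.empty IntE ex_in_conv less_zeroE mem_Collect_eq)
  then have "rejects I M v p"
    using swap.better_in_rejected by blast
  with under have "card (assigned_l I M ?l) = lcap I ?l \<and> (\<forall>x\<in>assigned_l I M ?l. (x, v) \<in> lpref I ?l)"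
    by (simp add: rejects_def)
  moreover have "(v, s) \<in> lpref I ?l"
    using v above by (auto simp: assigned_p_def)
  ultimately show ?thesis
    using lpref_trans[OF lec_lecturer[OF p]] by blast
qed

end

context two_stable
begin

lemma meet_rejects:
  assumes s: "acceptable I s p" and rejects: "rejects I M s p" "rejects I M' s p"
  shows "rejects I (meet I M M') s p"
proof (cases "card (assigned_p (meet I M M') p) = pcap I p")
  case True
  have "assigned_p (meet I M M') p \<subseteq> assigned_p M p \<union> assigned_p M' p"
    by (auto simp: assigned_p_def meet_char)
  then show ?thesis
    using True rejects_project_above[OF matching rejects(1)] rejects_project_above[OF matching' rejects(2)]
    unfolding rejects_def by blast
next
  case False
  let ?l = "lec I p"
  have p: "p \<in> projects I" and l: "?l \<in> lecturers I"
    using acceptableD[OF s] by simp_all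
  have "\<forall>x\<in>assigned_l I M ?l \<union> assigned_l I M' ?l. (x, s) \<in> lpref I ?l"
    using meet_rejects_lecturer[OF rejects False p] swap.meet_rejects_lecturer[OF rejects(2,1) _ p]
      False meet_commute[of I M' M] by auto
  moreover have "assigned_l I (meet I M M') ?l \<subseteq> assigned_l I M ?l \<union> assigned_l I M' ?l"
    by (auto simp: assigned_l_def meet_char)
  moreover have "card (assigned_l I (meet I M M') ?l) = lcap I ?l"
  proof -
    have "card (assigned_p M p) \<noteq> pcap I p \<or> card (assigned_p M' p) \<noteq> pcap I p"
      using card_assigned_p_meet_join[OF p] False by auto
    then have "card (assigned_l I M ?l) = lcap I ?l \<or> card (assigned_l I M' ?l) = lcap I ?l"
      using rejects by (auto simp: rejects_def)
    then show ?thesis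
      using card_assigned_l_meet[OF l] card_assigned_l_eq[OF l] by auto
  qed
  ultimately show ?thesis
    unfolding rejects_def by blast
qed

lemma join_rejects:
  assumes s: "acceptable I s p" and rejects: "rejects I M' s p"
  shows "rejects I (join I M M') s p"
proof -
  let ?l = "lec I p"
  have p: "p \<in> projects I" and l: "?l \<in> lecturers I"
    using acceptableD[OF s] by simp_all
  have above: "\<forall>x\<in>assigned_p M' p. (x, s) \<in> lpref I ?l"
    using rejects_project_above[OF matching' rejects] by blast
  consider (lecturer) "card (assigned_l I M' ?l) = lcap I ?l" "\<forall>x\<in>assigned_l I M' ?l. (x, s) \<in> lpref I ?l"
    | (project) "card (assigned_p M' p) = pcap I p"
    using rejects by (auto simp: rejects_def)
  then show ?thesis
  proof cases
    case lecturer
    then show ?thesis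
      using join_rejects_lecturer[OF l] by (simp add: rejects_def)
  next
    case project
    show ?thesis
    proof (cases "card (assigned_p (join I M M') p) = pcap I p")
      case True
      then show ?thesis
        using join_rejects_if_full[OF p project above] by (simp add: rejects_def)
    next
      case False
      then have "card (assigned_l I M ?l) = lcap I ?l" "\<forall>x\<in>assigned_l I M ?l. (x, s) \<in> lpref I ?l"
        using join_rejects_if_undersubscribed[OF p project above] by blast+
      from swap.join_rejects_lecturer[OF l this] show ?thesis
        using join_commute[of I M' M] by (simp add: rejects_def)
    qed
  qed
qed

end

context two_stable
begin

lemma meet_stable: "stable I (meet I M M')"
proof -
  have "rejects I (meet I M M') s p" if "acceptable I s p" "desires I (meet I M M') s p" for s p
    using meet_desires[OF that(2)] meet_rejects[OF that(1)] that(1) stable stable'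
    by (simp add: stable_iff)
  then show ?thesis
    using meet_matching by (simp add: stable_iff)
qed

lemma join_stable: "stable I (join I M M')"
proof -
  have "rejects I (join I M M') s p" if "acceptable I s p" "desires I (join I M M') s p" for s p
    using join_desires[OF that(2)]
  proof
    assume "desires I M s p"
    then have "rejects I M s p"
      using stable that(1) by (simp add: stable_iff)
    then show ?thesis
      using swap.join_rejects[OF that(1)] join_commute[of I M' M] by simp
  next
    assume "desires I M' s p"
    then show ?thesis
      using stable' that(1) join_rejects[OF that(1)] by (simp add: stable_iff)
  qed
  then show ?thesis
    using join_matching by (simp add: stable_iff)
qed

end

section \<open>The lattice of stable matchings\<close>

lemma dominates_iff:
  "dominates I M M' \<longleftrightarrow> (\<forall>s\<in>students I. s \<notin> Domain M \<and> s \<notin> Domain M' \<or>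
     (\<exists>a b. (s, a) \<in> M \<and> (s, b) \<in> M' \<and> (a, b) \<in> (spref I s)\<^sup>=))"
  by (auto simp: dominates_def sprefers_def sindiff_def is_assigned_def)

lemma dominates_Domain: "dominates I N K \<Longrightarrow> s \<in> students I \<Longrightarrow> s \<in> Domain N \<longleftrightarrow> s \<in> Domain K"
  unfolding dominates_iff by blast

lemma dominatesI:
  assumes "\<And>s. s \<in> students I \<Longrightarrow> s \<in> Domain N \<longleftrightarrow> s \<in> Domain K"
    and "\<And>s k. s \<in> students I \<Longrightarrow> (s, k) \<in> K \<Longrightarrow> \<exists>n. (s, n) \<in> N \<and> (n, k) \<in> (spref I s)\<^sup>="
  shows "dominates I N K"
  unfolding dominates_iff
proof
  fix s assume s: "s \<in> students I"
  show "s \<notin> Domain N \<and> s \<notin> Domain K \<or> (\<exists>n k. (s, n) \<in> N \<and> (s, k) \<in> K \<and> (n, k) \<in> (spref I s)\<^sup>=)"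
  proof (cases "s \<in> Domain K")
    case True
    then obtain k where "(s, k) \<in> K" by blast
    with assms(2)[OF s this] show ?thesis by blast
  qed (use assms(1)[OF s] in blast)
qed

context spa_s
begin

lemma dominates_at:
  assumes "dominates I N K" "is_matching I N" "is_matching I K" "(s, n) \<in> N" "(s, k) \<in> K"
  shows "(n, k) \<in> (spref I s)\<^sup>="
proof -
  have "s \<in> students I"
    using acceptableD(1)[OF matching_acceptable[OF assms(2,4)]] .
  with assms(1,4) obtain n' k' where "(s, n') \<in> N" "(s, k') \<in> K" "(n', k') \<in> (spref I s)\<^sup>="
    unfolding dominates_iff by blast
  moreover have "n' = n" "k' = k"
    using calculation(1,2) matching_unique[OF assms(2,4)] matching_unique[OF assms(3,5)] by blast+
  ultimately show ?thesis by simp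
qed

lemma dominates_refl: "dominates I M M"
  by (auto simp: dominates_iff)

lemma dominates_trans:
  assumes M': "is_matching I M'" and "dominates I M M'" "dominates I M' M''"
  shows "dominates I M M''"
  unfolding dominates_iff
proof
  fix s assume s: "s \<in> students I"
  with assms(2,3) have
    "s \<notin> Domain M \<and> s \<notin> Domain M' \<or> (\<exists>a b. (s, a) \<in> M \<and> (s, b) \<in> M' \<and> (a, b) \<in> (spref I s)\<^sup>=)"
    "s \<notin> Domain M' \<and> s \<notin> Domain M'' \<or> (\<exists>b c. (s, b) \<in> M' \<and> (s, c) \<in> M'' \<and> (b, c) \<in> (spref I s)\<^sup>=)"
    by (simp_all add: dominates_iff)
  then show "s \<notin> Domain M \<and> s \<notin> Domain M'' \<or> (\<exists>a c. (s, a) \<in> M \<and> (s, c) \<in> M'' \<and> (a, c) \<in> (spref I s)\<^sup>=)"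
    using matching_unique[OF M'] spref_trans[OF s] by blast
qed

lemma dominates_antisym:
  assumes M: "is_matching I M" and M': "is_matching I M'" and "dominates I M M'" "dominates I M' M"
  shows "M = M'"
proof -
  have "(s, p) \<in> N'" if N: "is_matching I N" and N': "is_matching I N'"
    and NN': "dominates I N N'" and N'N: "dominates I N' N" and sp: "(s, p) \<in> N" for N N' s p
  proof -
    have s: "s \<in> students I"
      using acceptableD(1)[OF matching_acceptable[OF N sp]] .
    then obtain q where q: "(s, q) \<in> N'"
      using dominates_Domain[OF NN' s] sp by blast
    have "(p, q) \<in> (spref I s)\<^sup>=" "(q, p) \<in> (spref I s)\<^sup>="
      using dominates_at[OF NN' N N' sp q] dominates_at[OF N'N N' N q sp] .
    with q show ?thesis
      using spref_asym[OF s] by auto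
  qed
  with assms show ?thesis
    by auto
qed

context
  fixes M M' :: "('s \<times> 'p) set"
  assumes M: "is_matching I M" and M': "is_matching I M'" and same: "Domain M = Domain M'"
begin

lemma Domain_meet_join_left: "Domain (meet I M M') = Domain M" "Domain (join I M M') = Domain M"
  using Domain_meet_join[OF M M'] same by simp_all

lemma assigned_both:
  assumes "s \<in> Domain M"
  obtains a b where "(s, a) \<in> M" "(s, b) \<in> M'" "s \<in> students I" "a \<in> acc I s" "b \<in> acc I s"
  using assms same acceptableD(1,2)[OF matching_acceptable[OF M]] acceptableD(2)[OF matching_acceptable[OF M']]
  by blast

lemma meet_lower: "dominates I (meet I M M') M" "dominates I (meet I M M') M'"
proof -
  have lower: "\<exists>m. (s, m) \<in> meet I M M' \<and> (m, k) \<in> (spref I s)\<^sup>="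
    if k: "(s, k) \<in> M \<or> (s, k) \<in> M'" for s k
  proof -
    have "s \<in> Domain M"
      using k same by blast
    then obtain a b where ab: "(s, a) \<in> M" "(s, b) \<in> M'" and s: "s \<in> students I"
      and acc: "a \<in> acc I s" "b \<in> acc I s"
      by (rule assigned_both)
    then have "k = a \<or> k = b"
      using k matching_unique[OF M] matching_unique[OF M'] by blast
    then show ?thesis
      using meet_join_pointwise(1)[OF M M' ab] rel_min_le_left[where r = "spref I s" and a = a and b = b]
        rel_min_le_right[OF spref_order[OF s] acc] by blast
  qed
  show "dominates I (meet I M M') M"
    by (rule dominatesI) (simp add: Domain_meet_join_left, use lower in blast)
  show "dominates I (meet I M M') M'"
    by (rule dominatesI) (simp add: Domain_meet_join_left same, use lower in blast)
qed

lemma join_upper: "dominates I M (join I M M')" "dominates I M' (join I M M')"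
proof -
  have upper: "(\<exists>k. (s, k) \<in> M \<and> (k, m) \<in> (spref I s)\<^sup>=) \<and> (\<exists>k. (s, k) \<in> M' \<and> (k, m) \<in> (spref I s)\<^sup>=)"
    if m: "(s, m) \<in> join I M M'" for s m
  proof -
    have "s \<in> Domain M"
      using m Domain_meet_join_left by blast
    then obtain a b where ab: "(s, a) \<in> M" "(s, b) \<in> M'" and s: "s \<in> students I"
      and acc: "a \<in> acc I s" "b \<in> acc I s"
      by (rule assigned_both)
    then have "m = rel_max (spref I s) a b"
      using m meet_join_pointwise(2)[OF M M' ab] by blast
    then show ?thesis
      using ab rel_max_ge_left[where r = "spref I s" and a = a and b = b]
        rel_max_ge_right[OF spref_order[OF s] acc] by blast
  qed
  show "dominates I M (join I M M')"
    by (rule dominatesI) (simp add: Domain_meet_join_left, use upper in blast)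
  show "dominates I M' (join I M M')"
    by (rule dominatesI) (simp add: Domain_meet_join_left same, use upper in blast)
qed

lemma meet_greatest:
  assumes N: "is_matching I N" and NM: "dominates I N M" and NM': "dominates I N M'"
  shows "dominates I N (meet I M M')"
proof (rule dominatesI)
  show "s \<in> Domain N \<longleftrightarrow> s \<in> Domain (meet I M M')" if "s \<in> students I" for s
    using dominates_Domain[OF NM that] Domain_meet_join_left by simp
next
  fix s m assume s: "s \<in> students I" and m: "(s, m) \<in> meet I M M'"
  then have "s \<in> Domain M"
    using Domain_meet_join_left by blast
  then obtain a b where ab: "(s, a) \<in> M" "(s, b) \<in> M'"
    by (rule assigned_both)
  obtain n where n: "(s, n) \<in> N"
    using dominates_Domain[OF NM s] ab by blast
  have "(n, rel_min (spref I s) a b) \<in> (spref I s)\<^sup>="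
    using dominates_at[OF NM N M n ab(1)] dominates_at[OF NM' N M' n ab(2)] by (rule le_rel_min)
  moreover have "m = rel_min (spref I s) a b"
    using m meet_join_pointwise(1)[OF M M' ab] by blast
  ultimately show "\<exists>n. (s, n) \<in> N \<and> (n, m) \<in> (spref I s)\<^sup>="
    using n by blast
qed

lemma join_least:
  assumes N: "is_matching I N" and MN: "dominates I M N" and M'N: "dominates I M' N"
  shows "dominates I (join I M M') N"
proof (rule dominatesI)
  show "s \<in> Domain (join I M M') \<longleftrightarrow> s \<in> Domain N" if "s \<in> students I" for s
    using dominates_Domain[OF MN that] Domain_meet_join_left by simp
next
  fix s n assume s: "s \<in> students I" and n: "(s, n) \<in> N"
  then have "s \<in> Domain M"
    using dominates_Domain[OF MN s] by blast
  then obtain a b where ab: "(s, a) \<in> M" "(s, b) \<in> M'"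
    by (rule assigned_both)
  have "(rel_max (spref I s) a b, n) \<in> (spref I s)\<^sup>="
    using dominates_at[OF MN M N ab(1) n] dominates_at[OF M'N M' N ab(2) n] by (rule rel_max_le)
  then show "\<exists>m. (s, m) \<in> join I M M' \<and> (m, n) \<in> (spref I s)\<^sup>="
    using meet_join_pointwise(2)[OF M M' ab] by blast
qed

end

lemma meet_join_distrib:
  assumes M: "stable I M" and M': "stable I M'" and M'': "stable I M''"
  shows "meet I M (join I M' M'') = join I (meet I M M') (meet I M M'')"
proof -
  interpret M'M'': two_stable I M' M'' by unfold_locales (fact M' M'')+
  interpret MM': two_stable I M M' by unfold_locales (fact M M')+
  interpret MM'': two_stable I M M'' by unfold_locales (fact M M'')+
  have J: "is_matching I (join I M' M'')" and N: "is_matching I (meet I M M')" "is_matching I (meet I M M'')"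
    using M'M''.join_matching MM'.meet_matching MM''.meet_matching .
  have "(s, p) \<in> meet I M (join I M' M'') \<longleftrightarrow> (s, p) \<in> join I (meet I M M') (meet I M M'')" for s p
  proof (cases "s \<in> Domain M")
    case True
    let ?min = "rel_min (spref I s)" and ?max = "rel_max (spref I s)"
    obtain a b c where abc: "(s, a) \<in> M" "(s, b) \<in> M'" "(s, c) \<in> M''"
      using True MM'.Domain_eq MM''.Domain_eq by blast
    have "s \<in> students I" "a \<in> acc I s" "b \<in> acc I s" "c \<in> acc I s"
      using acceptableD(1,2) matching_acceptable[OF MM'.matching abc(1)]
        matching_acceptable[OF MM'.matching' abc(2)] matching_acceptable[OF MM''.matching' abc(3)]
      by blast+
    note distrib = rel_min_rel_max_distrib[OF spref_order[OF this(1)] this(2-4)]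
    have bc: "(s, ?max b c) \<in> join I M' M''"
      using meet_join_pointwise(2)[OF M'M''.matching M'M''.matching' abc(2,3)] by blast
    have ab: "(s, ?min a b) \<in> meet I M M'" and ac: "(s, ?min a c) \<in> meet I M M''"
      using meet_join_pointwise(1)[OF MM'.matching MM'.matching' abc(1,2)]
        meet_join_pointwise(1)[OF MM''.matching MM''.matching' abc(1,3)] by blast+
    show ?thesis
      using meet_join_pointwise(1)[OF MM'.matching J abc(1) bc]
        meet_join_pointwise(2)[OF N ab ac] distrib by simp
  next
    case False
    then show ?thesis
      using Domain_meet_join[OF MM'.matching J] Domain_meet_join[OF N]
        Domain_meet_join[OF MM'.matching MM'.matching'] by blast
  qed
  then show ?thesis by auto
qed

end

theorem theorem2:
  fixes I :: "('s,'p,'l) spa"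
  assumes "spa_instance I"
  defines "SM \<equiv> {M. stable I M}"
  shows
    \<comment> \<open>dominance is a partial order on the stable matchings\<close>
    "(\<forall>M\<in>SM. dominates I M M) \<and>
     (\<forall>M\<in>SM. \<forall>M'\<in>SM. \<forall>M''\<in>SM. dominates I M M' \<longrightarrow> dominates I M' M'' \<longrightarrow> dominates I M M'') \<and>
     (\<forall>M\<in>SM. \<forall>M'\<in>SM. dominates I M M' \<longrightarrow> dominates I M' M \<longrightarrow> M = M') \<and>
     \<comment> \<open>meet is the greatest lower bound, join the least upper bound, both stable\<close>
     (\<forall>M\<in>SM. \<forall>M'\<in>SM. meet I M M' \<in> SM \<and> dominates I (meet I M M') M \<and>
        dominates I (meet I M M') M' \<and>
        (\<forall>N\<in>SM. dominates I N M \<longrightarrow> dominates I N M' \<longrightarrow> dominates I N (meet I M M'))) \<and>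
     (\<forall>M\<in>SM. \<forall>M'\<in>SM. join I M M' \<in> SM \<and> dominates I M (join I M M') \<and>
        dominates I M' (join I M M') \<and>
        (\<forall>N\<in>SM. dominates I M N \<longrightarrow> dominates I M' N \<longrightarrow> dominates I (join I M M') N)) \<and>
     \<comment> \<open>distributivity\<close>
     (\<forall>M\<in>SM. \<forall>M'\<in>SM. \<forall>M''\<in>SM.
        meet I M (join I M' M'') = join I (meet I M M') (meet I M M''))"
proof -
  interpret spa_s I by unfold_locales (fact assms(1))
  have two: "two_stable I M M'" if "M \<in> SM" "M' \<in> SM" for M M'
    using that by unfold_locales (simp_all add: SM_def)
  have matching: "is_matching I M" if "M \<in> SM" for M
    using that by (simp add: SM_def stable_def)
  have same: "Domain M = Domain M'" if "M \<in> SM" "M' \<in> SM" for M M'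
    using two_stable.Domain_eq[OF two[OF that]] .
  have closed: "meet I M M' \<in> SM" "join I M M' \<in> SM" if "M \<in> SM" "M' \<in> SM" for M M'
    using two_stable.meet_stable[OF two[OF that]] two_stable.join_stable[OF two[OF that]]
    by (simp_all add: SM_def)
  have distrib: "meet I M (join I M' M'') = join I (meet I M M') (meet I M M'')"
    if "M \<in> SM" "M' \<in> SM" "M'' \<in> SM" for M M' M''
    using meet_join_distrib that by (simp add: SM_def)
  show ?thesis
    by (intro conjI ballI impI)
      (rule dominates_refl closed meet_lower[OF matching matching same] join_upper[OF matching matching same]
         meet_greatest[OF matching matching same matching] join_least[OF matching matching same matching]
         distrib dominates_antisym[OF matching matching] dominates_trans[OF matching]; assumption)+
qed

end
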